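(* Let $Fa$ and $Fb$ be two distinct points of $\mathrm{PG}(n-1,q)$ ($a,b\in L^*$), and let $\ell$ be the line joining them. Put $m=[F(ab^{-1}):F]$, the degree of the field extension of $F$ generated by $ab^{-1}$. Then $j(\ell)$ is the image of an $(m-1)$-uple embedding.
   Context: Let $q$ be a prime power, $F=\mathbb F_q$, $n\ge 2$ an integer, and $L=\mathbb F_{q^n}\supseteq F$. Regard $L$ as an $n$-dimensional $F$-vector space; $\mathrm{PG}(n-1,q)$ denotes the projective space whose points are the one-dimensional $F$-subspaces $Fx$, $x\in L^*$, and whose lines are the two-dimensional $F$-subspaces (identified with their sets of points). Define $j:\mathrm{PG}(n-1,q)\to\mathrm{PG}(n-1,q)$ by $j(Fx)=Fx^{-1}$. For an integer $r\ge1$, a set $X$ of points of a projective space $\mathrm{PG}(V)$ over $F$ is called the image of an $r$-uple embedding if there is an injective $F$-linear map $\phi:F^{r+1}\to V$ such that $X=\{F\,\phi(t_0^r,t_0^{r-1}t_1,\dots,t_0t_1^{r-1},t_1^r):(t_0,t_1)\in F^2\setminus\{(0,0)\}\}$. *)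

theory Defs
  imports Main
begin

definition subfield :: "'a::field set \<Rightarrow> bool" where
  "subfield K \<longleftrightarrow> 0 \<in> K \<and> 1 \<in> K \<and> (\<forall>x\<in>K. \<forall>y\<in>K. x + y \<in> K \<and> x * y \<in> K)
     \<and> (\<forall>x\<in>K. - x \<in> K \<and> inverse x \<in> K)"

definition gen_field :: "'a::field set \<Rightarrow> 'a \<Rightarrow> 'a set" where
  "gen_field F c = \<Inter>{K. subfield K \<and> F \<subseteq> K \<and> c \<in> K}"

definition has_dim :: "'a::field set \<Rightarrow> 'a set \<Rightarrow> nat \<Rightarrow> bool" where
  "has_dim F K m \<longleftrightarrow> (\<exists>bs. length bs = m \<and> set bs \<subseteq> K \<and>
     (\<forall>y\<in>K. \<exists>!cs. length cs = m \<and> set cs \<subseteq> F \<and> y = sum_list (map2 (*) cs bs)))"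

definition pt :: "'a::field set \<Rightarrow> 'a \<Rightarrow> 'a set" where
  "pt F x = {c * x | c. c \<in> F}"

definition points :: "'a::field set \<Rightarrow> 'a set set" where
  "points F = {pt F x | x. x \<noteq> 0}"

definition join_line :: "'a::field set \<Rightarrow> 'a \<Rightarrow> 'a \<Rightarrow> 'a set set" where
  "join_line F a b = {pt F x | x. x \<noteq> 0 \<and> (\<exists>c\<in>F. \<exists>d\<in>F. x = c * a + d * b)}"

definition jmap :: "'a::field set \<Rightarrow> 'a set \<Rightarrow> 'a set" where
  "jmap F P = pt F (inverse (SOME x. x \<noteq> 0 \<and> P = pt F x))"

text \<open>Image of an r-uple embedding into PG(V), V = the whole field viewed as F-space.
  F^(r+1) is modelled as functions nat => 'a with values in F on {0..r} and 0 elsewhere.\<close>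
definition coord_space :: "'a::field set \<Rightarrow> nat \<Rightarrow> (nat \<Rightarrow> 'a) set" where
  "coord_space F r = {s. (\<forall>i\<le>r. s i \<in> F) \<and> (\<forall>i>r. s i = 0)}"

definition F_linear_on :: "'a::field set \<Rightarrow> nat \<Rightarrow> ((nat \<Rightarrow> 'a) \<Rightarrow> 'a) \<Rightarrow> bool" where
  "F_linear_on F r \<phi> \<longleftrightarrow>
     (\<forall>s\<in>coord_space F r. \<forall>t\<in>coord_space F r. \<phi> (\<lambda>i. s i + t i) = \<phi> s + \<phi> t) \<and>
     (\<forall>c\<in>F. \<forall>s\<in>coord_space F r. \<phi> (\<lambda>i. c * s i) = c * \<phi> s)"

definition veronese :: "nat \<Rightarrow> 'a::field \<Rightarrow> 'a \<Rightarrow> nat \<Rightarrow> 'a" where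
  "veronese r t0 t1 = (\<lambda>i. if i \<le> r then t0 ^ (r - i) * t1 ^ i else 0)"

definition is_ruple_image :: "'a::field set \<Rightarrow> nat \<Rightarrow> 'a set set \<Rightarrow> bool" where
  "is_ruple_image F r X \<longleftrightarrow>
     (\<exists>\<phi>. F_linear_on F r \<phi> \<and> inj_on \<phi> (coord_space F r) \<and>
        X = {pt F (\<phi> (veronese r t0 t1)) | t0 t1. t0 \<in> F \<and> t1 \<in> F \<and> (t0, t1) \<noteq> (0, 0)})"

end

theory Submission
  imports Defs
begin

text \<open>Write c = a / b, so that the points of the line are F b (s - t c) with (s, t) \<noteq> (0, 0).
  Over a finite F, counting shows that 1, c, \<dots>, c^(m-1) is an F-basis of F(c); let
  \<mu> = X^m - (\<Sum>i<m. \<gamma>_i X^i) be the resulting minimal polynomial and \<Sum>k<m. e_k X^(m-1-k)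
  its quotient by X - c. The e_k are again a basis, being unitriangular in the powers of c.
  Homogenising, (s - t c) (\<Sum>k<m. e_k s^(m-1-k) t^k) is a nonzero element of F, so j sends
  F b (s - t c) to F b^-1 (\<Sum>k<m. e_k s^(m-1-k) t^k): the image of (s, t) under the
  (m-1)-uple embedding followed by the injective linear map \<sigma> \<mapsto> b^-1 (\<Sum>k<m. \<sigma>_k e_k).\<close>

lemma subfield_0: "subfield F \<Longrightarrow> 0 \<in> F"
  and subfield_1: "subfield F \<Longrightarrow> 1 \<in> F"
  and subfield_add: "subfield F \<Longrightarrow> x \<in> F \<Longrightarrow> y \<in> F \<Longrightarrow> x + y \<in> F"
  and subfield_mult: "subfield F \<Longrightarrow> x \<in> F \<Longrightarrow> y \<in> F \<Longrightarrow> x * y \<in> F"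
  and subfield_uminus: "subfield F \<Longrightarrow> x \<in> F \<Longrightarrow> - x \<in> F"
  and subfield_inverse: "subfield F \<Longrightarrow> x \<in> F \<Longrightarrow> inverse x \<in> F"
  by (simp_all add: subfield_def)

lemma subfield_diff: "subfield F \<Longrightarrow> x \<in> F \<Longrightarrow> y \<in> F \<Longrightarrow> x - y \<in> F"
  by (metis diff_conv_add_uminus subfield_add subfield_uminus)

lemma subfield_divide: "subfield F \<Longrightarrow> x \<in> F \<Longrightarrow> y \<in> F \<Longrightarrow> x / y \<in> F"
  by (metis divide_inverse subfield_mult subfield_inverse)

lemma subfield_power: "subfield F \<Longrightarrow> x \<in> F \<Longrightarrow> x ^ k \<in> F"
  by (induction k) (auto simp: subfield_1 subfield_mult)

lemma sum_mem_if_add_closed: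
  assumes "finite A" "0 \<in> W" "\<And>x y. x \<in> W \<Longrightarrow> y \<in> W \<Longrightarrow> x + y \<in> W"
    and "\<And>i. i \<in> A \<Longrightarrow> f i \<in> W"
  shows "sum f A \<in> W"
  using assms(1,4) by (induction A rule: finite_induct) (auto simp: assms(2,3))

lemma subfield_sum: "subfield F \<Longrightarrow> finite A \<Longrightarrow> (\<And>i. i \<in> A \<Longrightarrow> f i \<in> F) \<Longrightarrow> sum f A \<in> F"
  by (rule sum_mem_if_add_closed) (auto simp: subfield_0 subfield_add)

lemma gen_field_mem: "x \<in> gen_field F c \<longleftrightarrow> (\<forall>K. subfield K \<and> F \<subseteq> K \<and> c \<in> K \<longrightarrow> x \<in> K)"
  unfolding gen_field_def by blast

lemma subset_gen_field: "F \<subseteq> gen_field F c"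
  and mem_gen_field: "c \<in> gen_field F c"
  and gen_field_least: "subfield K \<Longrightarrow> F \<subseteq> K \<Longrightarrow> c \<in> K \<Longrightarrow> gen_field F c \<subseteq> K"
  by (auto simp: gen_field_mem)

lemma subfield_gen_field: "subfield (gen_field F c)"
proof -
  let ?G = "gen_field F c"
  have "0 \<in> ?G" "1 \<in> ?G"
    by (auto simp: gen_field_mem subfield_0 subfield_1)
  moreover have "x + y \<in> ?G \<and> x * y \<in> ?G" if "x \<in> ?G" "y \<in> ?G" for x y
    using that by (auto simp: gen_field_mem intro: subfield_add subfield_mult)
  moreover have "- x \<in> ?G \<and> inverse x \<in> ?G" if "x \<in> ?G" for x
    using that by (auto simp: gen_field_mem intro: subfield_uminus subfield_inverse)
  ultimately show ?thesis
    unfolding subfield_def by blast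
qed

lemma pt_mult_scalar:
  assumes "subfield F" "l \<in> F" "l \<noteq> 0"
  shows "pt F (l * x) = pt F x"
proof -
  have "c * (l * x) \<in> pt F x" if "c \<in> F" for c
    using that assms unfolding pt_def by (auto intro!: exI[of _ "c * l"] subfield_mult)
  moreover have "c * x \<in> pt F (l * x)" if "c \<in> F" for c
    using that assms unfolding pt_def
    by (auto intro!: exI[of _ "c * inverse l"] subfield_mult subfield_inverse)
  ultimately show ?thesis unfolding pt_def by blast
qed

lemma jmap_pt:
  assumes "subfield F" "x \<noteq> 0"
  shows "jmap F (pt F x) = pt F (inverse x)"
proof -
  define y where "y = (SOME y. y \<noteq> 0 \<and> pt F x = pt F y)"
  have y: "y \<noteq> 0 \<and> pt F x = pt F y"
    unfolding y_def by (rule someI[of _ x]) (use assms in auto)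
  have "x \<in> pt F y"
    using y subfield_1[OF assms(1)] unfolding pt_def by force
  then obtain l where l: "l \<in> F" "x = l * y"
    unfolding pt_def by auto
  with assms have "l \<noteq> 0" by auto
  have "inverse y = l * inverse x"
    using l \<open>l \<noteq> 0\<close> y by (simp add: field_simps)
  then have "pt F (inverse y) = pt F (l * inverse x)"
    by simp
  also have "\<dots> = pt F (inverse x)"
    using pt_mult_scalar assms l \<open>l \<noteq> 0\<close> by blast
  finally show ?thesis
    unfolding jmap_def y_def[symmetric] .
qed

definition coords :: "'a::field set \<Rightarrow> nat \<Rightarrow> (nat \<Rightarrow> 'a) set" where
  "coords F k = {\<sigma>. (\<forall>i<k. \<sigma> i \<in> F) \<and> (\<forall>i\<ge>k. \<sigma> i = 0)}"

definition lincomb :: "(nat \<Rightarrow> 'a::field) \<Rightarrow> nat \<Rightarrow> (nat \<Rightarrow> 'a) \<Rightarrow> 'a" where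
  "lincomb g k \<sigma> = (\<Sum>i<k. \<sigma> i * g i)"

definition lin_span :: "'a::field set \<Rightarrow> (nat \<Rightarrow> 'a) \<Rightarrow> nat \<Rightarrow> 'a set" where
  "lin_span F g k = lincomb g k ` coords F k"

lemma coord_space_eq_coords: "coord_space F r = coords F (Suc r)"
  unfolding coord_space_def coords_def by (auto simp: less_Suc_eq_le)

lemma coords_mem: "subfield F \<Longrightarrow> \<sigma> \<in> coords F k \<Longrightarrow> \<sigma> i \<in> F"
  unfolding coords_def by (cases "i < k") (auto simp: subfield_0)

lemma coords_add: "subfield F \<Longrightarrow> \<sigma> \<in> coords F k \<Longrightarrow> \<tau> \<in> coords F k \<Longrightarrow> (\<lambda>i. \<sigma> i + \<tau> i) \<in> coords F k"
  and coords_smult: "subfield F \<Longrightarrow> c \<in> F \<Longrightarrow> \<sigma> \<in> coords F k \<Longrightarrow> (\<lambda>i. c * \<sigma> i) \<in> coords F k"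
  and coords_zero: "subfield F \<Longrightarrow> (\<lambda>i. 0) \<in> coords F k"
  and coords_unit: "subfield F \<Longrightarrow> j < k \<Longrightarrow> (\<lambda>i. if i = j then 1 else 0) \<in> coords F k"
  unfolding coords_def by (auto simp: subfield_0 subfield_1 subfield_add subfield_mult)

lemma bij_betw_coords_lists:
  "bij_betw (\<lambda>\<sigma>. map \<sigma> [0..<k]) (coords F k) {xs. set xs \<subseteq> F \<and> length xs = k}"
proof (rule bij_betwI')
  fix \<sigma> \<tau> assume "\<sigma> \<in> coords F k" "\<tau> \<in> coords F k"
  then show "(map \<sigma> [0..<k] = map \<tau> [0..<k]) = (\<sigma> = \<tau>)"
    unfolding coords_def by (auto simp: map_eq_conv fun_eq_iff)
next
  fix \<sigma> assume "\<sigma> \<in> coords F k"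
  then show "map \<sigma> [0..<k] \<in> {xs. set xs \<subseteq> F \<and> length xs = k}"
    unfolding coords_def by auto
next
  fix xs assume xs: "xs \<in> {xs. set xs \<subseteq> F \<and> length xs = k}"
  let ?\<sigma> = "\<lambda>i. if i < k then xs ! i else 0"
  have "?\<sigma> \<in> coords F k" "xs = map ?\<sigma> [0..<k]"
    using xs unfolding coords_def by (auto intro: nth_equalityI)
  then show "\<exists>\<sigma>\<in>coords F k. xs = map \<sigma> [0..<k]" by blast
qed

lemma finite_coords: "finite F \<Longrightarrow> finite (coords F k)"
  using bij_betw_finite[OF bij_betw_coords_lists] finite_lists_length_eq by blast

lemma card_coords: "finite F \<Longrightarrow> card (coords F k) = card F ^ k"
  using bij_betw_same_card[OF bij_betw_coords_lists] card_lists_length_eq by metis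

lemma lincomb_add: "lincomb g k (\<lambda>i. \<sigma> i + \<tau> i) = lincomb g k \<sigma> + lincomb g k \<tau>"
  and lincomb_smult: "lincomb g k (\<lambda>i. c * \<sigma> i) = c * lincomb g k \<sigma>"
  unfolding lincomb_def by (simp_all add: distrib_right sum.distrib sum_distrib_left mult.assoc)

lemma lincomb_Suc: "lincomb g (Suc k) \<sigma> = lincomb g k \<sigma> + \<sigma> k * g k"
  unfolding lincomb_def by simp

lemma lincomb_unit: "j < k \<Longrightarrow> lincomb g k (\<lambda>i. if i = j then 1 else 0) = g j"
  unfolding lincomb_def by (simp add: if_distrib[of "\<lambda>x. x * _"] cong: if_cong)

lemma lin_span_0: "lin_span F g 0 = {0}"
  unfolding lin_span_def coords_def lincomb_def by auto

lemma lin_span_add: "subfield F \<Longrightarrow> x \<in> lin_span F g k \<Longrightarrow> y \<in> lin_span F g k \<Longrightarrow> x + y \<in> lin_span F g k"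
  and lin_span_smult: "subfield F \<Longrightarrow> c \<in> F \<Longrightarrow> x \<in> lin_span F g k \<Longrightarrow> c * x \<in> lin_span F g k"
  unfolding lin_span_def
  by (auto simp: lincomb_add[symmetric] lincomb_smult[symmetric] intro!: imageI coords_add coords_smult)

lemma lin_span_diff: "subfield F \<Longrightarrow> x \<in> lin_span F g k \<Longrightarrow> y \<in> lin_span F g k \<Longrightarrow> x - y \<in> lin_span F g k"
  using lin_span_add[of F "x" g k "(- 1) * y"] lin_span_smult[of F "- 1" y g k]
  by (simp add: subfield_1 subfield_uminus)

lemma lin_span_generator: "subfield F \<Longrightarrow> j < k \<Longrightarrow> g j \<in> lin_span F g k"
  unfolding lin_span_def by (metis lincomb_unit coords_unit imageI)

lemma lin_span_zero: "subfield F \<Longrightarrow> 0 \<in> lin_span F g k"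
  unfolding lin_span_def using coords_zero by (force simp: lincomb_def)

lemma lin_span_sum:
  "subfield F \<Longrightarrow> finite A \<Longrightarrow> (\<And>i. i \<in> A \<Longrightarrow> f i \<in> lin_span F g k) \<Longrightarrow> sum f A \<in> lin_span F g k"
  by (rule sum_mem_if_add_closed) (auto simp: lin_span_zero lin_span_add)

lemma lincomb_mem_lin_span:
  assumes "subfield F" "\<sigma> \<in> coords F k" "\<And>i. i < k \<Longrightarrow> g i \<in> lin_span F h l"
  shows "lincomb g k \<sigma> \<in> lin_span F h l"
  unfolding lincomb_def using assms
  by (intro lin_span_sum lin_span_smult) (auto simp: coords_mem)

lemma lin_span_subset:
  assumes "subfield K" "F \<subseteq> K" "\<And>i. i < k \<Longrightarrow> g i \<in> K"
  shows "lin_span F g k \<subseteq> K"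
  using assms unfolding lin_span_def lincomb_def coords_def
  by (auto intro!: subfield_sum subfield_mult)

lemma finite_lin_span: "finite F \<Longrightarrow> finite (lin_span F g k)"
  unfolding lin_span_def by (simp add: finite_coords)

lemma card_lin_span:
  "finite F \<Longrightarrow> inj_on (lincomb g k) (coords F k) \<Longrightarrow> card (lin_span F g k) = card F ^ k"
  unfolding lin_span_def by (simp add: card_image card_coords)

lemma inj_on_lincomb_if_spanned:
  assumes "subfield F" "finite F" "inj_on (lincomb g k) (coords F k)"
    and "\<And>i. i < k \<Longrightarrow> g i \<in> lin_span F h k"
  shows "inj_on (lincomb h k) (coords F k)"
proof -
  have fin: "finite (coords F k)"
    using finite_coords[OF assms(2)] .
  have "lin_span F g k \<subseteq> lin_span F h k"
    using assms(1,4) unfolding lin_span_def[of F g] by (auto intro: lincomb_mem_lin_span)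
  then have "card F ^ k \<le> card (lin_span F h k)"
    using card_lin_span[OF assms(2,3)] card_mono[OF finite_lin_span[OF assms(2)]] by metis
  moreover have "card (lin_span F h k) \<le> card (coords F k)"
    unfolding lin_span_def by (rule card_image_le[OF fin])
  ultimately have "card (lincomb h k ` coords F k) = card (coords F k)"
    unfolding lin_span_def card_coords[OF assms(2)] by simp
  then show ?thesis
    by (rule eq_card_imp_inj_on[OF fin])
qed

lemma lincomb_upd_beyond: "lincomb g k (\<sigma>(k := x)) = lincomb g k \<sigma>"
  unfolding lincomb_def by (rule sum.cong) auto

lemma lincomb_mem_lin_span_Suc:
  "\<sigma> \<in> coords F (Suc k) \<Longrightarrow> lincomb g k \<sigma> \<in> lin_span F g k"
  unfolding lin_span_def
  by (rule image_eqI[where x = "\<sigma>(k := 0)"]) (auto simp: coords_def lincomb_upd_beyond)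

lemma mem_lin_span_if_not_inj_on_Suc:
  assumes sF: "subfield F" and inj: "inj_on (lincomb g k) (coords F k)"
    and not_inj: "\<not> inj_on (lincomb g (Suc k)) (coords F (Suc k))"
  shows "g k \<in> lin_span F g k"
proof -
  obtain \<sigma> \<tau> where \<sigma>\<tau>: "\<sigma> \<in> coords F (Suc k)" "\<tau> \<in> coords F (Suc k)" "\<sigma> \<noteq> \<tau>"
    and eq: "lincomb g (Suc k) \<sigma> = lincomb g (Suc k) \<tau>"
    using not_inj unfolding inj_on_def by blast
  have "\<sigma> k \<noteq> \<tau> k"
  proof
    assume "\<sigma> k = \<tau> k"
    then have "lincomb g k (\<sigma>(k := 0)) = lincomb g k (\<tau>(k := 0))"
      using eq unfolding lincomb_Suc lincomb_upd_beyond by simp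
    moreover have "\<sigma>(k := 0) \<in> coords F k" "\<tau>(k := 0) \<in> coords F k"
      using \<sigma>\<tau> unfolding coords_def by auto
    ultimately have "\<sigma>(k := 0) = \<tau>(k := 0)"
      using inj unfolding inj_on_def by blast
    with \<open>\<sigma> k = \<tau> k\<close> have "\<sigma> = \<tau>"
      by (metis fun_upd_triv fun_upd_upd)
    with \<sigma>\<tau>(3) show False ..
  qed
  then have "g k = inverse (\<sigma> k - \<tau> k) * (lincomb g k \<tau> - lincomb g k \<sigma>)"
    using eq unfolding lincomb_Suc by (simp add: field_simps)
  also have "\<dots> \<in> lin_span F g k"
    using \<sigma>\<tau> sF
    by (intro lin_span_smult lin_span_diff lincomb_mem_lin_span_Suc subfield_inverse subfield_diff coords_mem)
  finally show ?thesis .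
qed

lemma sum_list_map2_mult_mem:
  "subfield K \<Longrightarrow> set xs \<subseteq> K \<Longrightarrow> set ys \<subseteq> K \<Longrightarrow> sum_list (map2 (*) xs ys) \<in> K"
proof (induction xs arbitrary: ys)
  case (Cons x xs)
  then show ?case
    by (cases ys) (auto simp: subfield_0 subfield_add subfield_mult)
qed (simp add: subfield_0)

lemma card_if_has_dim:
  assumes "subfield K" "F \<subseteq> K" "finite F" "has_dim F K m"
  shows "card K = card F ^ m"
proof -
  obtain bs where bs: "set bs \<subseteq> K"
    and unique: "\<forall>y\<in>K. \<exists>!cs. length cs = m \<and> set cs \<subseteq> F \<and> y = sum_list (map2 (*) cs bs)"
    using assms(4) unfolding has_dim_def by (elim exE conjE) (intro that)
  let ?f = "\<lambda>cs. sum_list (map2 (*) cs bs)"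
  let ?L = "{cs. set cs \<subseteq> F \<and> length cs = m}"
  have sub: "?f ` ?L \<subseteq> K"
    using sum_list_map2_mult_mem[OF assms(1) _ bs] assms(2) by auto
  moreover have "K \<subseteq> ?f ` ?L"
  proof
    fix y assume "y \<in> K"
    then obtain cs where "length cs = m \<and> set cs \<subseteq> F \<and> y = ?f cs"
      using ex1_implies_ex[OF bspec[OF unique]] by blast
    then show "y \<in> ?f ` ?L" by auto
  qed
  ultimately have image: "?f ` ?L = K"
    by (rule subset_antisym)
  have "inj_on ?f ?L"
  proof (rule inj_onI)
    fix cs ds assume cs: "cs \<in> ?L" and ds: "ds \<in> ?L" and eq: "?f cs = ?f ds"
    have "?f cs \<in> K" using sub cs by blast
    from bspec[OF unique this] obtain es
      where es: "\<And>ds. length ds = m \<and> set ds \<subseteq> F \<and> ?f cs = ?f ds \<Longrightarrow> ds = es"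
      by (elim ex1E) blast
    have "cs = es" "ds = es"
      using cs ds eq by (auto intro!: es)
    then show "cs = ds" by simp
  qed
  then have "card K = card ?L"
    using card_image image by fastforce
  then show ?thesis
    using card_lists_length_eq[OF assms(3)] by simp
qed

lemma lin_span_powers_mult_closed:
  assumes sF: "subfield F" and top: "c ^ k \<in> lin_span F ((^) c) k"
    and x: "x \<in> lin_span F ((^) c) k"
  shows "c * x \<in> lin_span F ((^) c) k"
proof -
  obtain \<sigma> where \<sigma>: "\<sigma> \<in> coords F k" "x = lincomb ((^) c) k \<sigma>"
    using x unfolding lin_span_def by blast
  have "c * x = lincomb (\<lambda>i. c ^ Suc i) k \<sigma>"
    unfolding \<sigma> lincomb_def by (simp add: sum_distrib_left mult_ac)
  also have "\<dots> \<in> lin_span F ((^) c) k"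
  proof (rule lincomb_mem_lin_span[OF sF \<sigma>(1)])
    fix i assume "i < k"
    then show "c ^ Suc i \<in> lin_span F ((^) c) k"
      using top lin_span_generator[OF sF, of "Suc i" k "(^) c"] by (cases "Suc i = k") auto
  qed
  finally show ?thesis .
qed

lemma subfield_lin_span_powers:
  assumes sF: "subfield F" and fin: "finite F" and "1 \<le> k"
    and top: "c ^ k \<in> lin_span F ((^) c) k"
  shows "subfield (lin_span F ((^) c) k)"
proof -
  let ?V = "lin_span F ((^) c) k"
  have one: "1 \<in> ?V"
    using lin_span_generator[OF sF, of 0 k "(^) c"] \<open>1 \<le> k\<close> by simp
  have uminus: "- x \<in> ?V" if "x \<in> ?V" for x
    using lin_span_smult[OF sF subfield_uminus[OF sF subfield_1[OF sF]] that] by simp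
  have power_mult: "c ^ i * x \<in> ?V" if "x \<in> ?V" for i x
    by (induction i) (use that lin_span_powers_mult_closed[OF sF top] in \<open>auto simp: mult.assoc\<close>)
  have mult: "x * y \<in> ?V" if x: "x \<in> ?V" and y: "y \<in> ?V" for x y
  proof -
    obtain \<tau> where \<tau>: "\<tau> \<in> coords F k" "x = lincomb ((^) c) k \<tau>"
      using x unfolding lin_span_def by blast
    have "x * y = lincomb (\<lambda>i. c ^ i * y) k \<tau>"
      unfolding \<tau> lincomb_def sum_distrib_right by (simp add: mult.assoc)
    also have "\<dots> \<in> ?V"
      using power_mult y by (intro lincomb_mem_lin_span[OF sF \<tau>(1)])
    finally show ?thesis .
  qed
  have inverse: "inverse x \<in> ?V" if "x \<in> ?V" for x
  proof (cases "x = 0")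
    case True
    then show ?thesis using lin_span_zero[OF sF] by simp
  next
    case False
    text \<open>x * _ is injective on the finite set ?V, hence onto.\<close>
    have "(\<lambda>y. x * y) ` ?V = ?V"
      using finite_lin_span[OF fin] mult that False
      by (intro endo_inj_surj) (auto simp: inj_on_def)
    then obtain y where "y \<in> ?V" "x * y = 1"
      using one by (metis imageE)
    then have "inverse x = y"
      using False by (simp add: field_simps)
    with \<open>y \<in> ?V\<close> show ?thesis by simp
  qed
  show ?thesis
    unfolding subfield_def by (simp add: lin_span_zero[OF sF] one lin_span_add[OF sF] mult uminus inverse)
qed

lemma gen_field_subset_lin_span_powers:
  assumes sF: "subfield F" and fin: "finite F" and "k \<noteq> 0"
    and top: "c ^ k \<in> lin_span F ((^) c) k"
  shows "gen_field F c \<subseteq> lin_span F ((^) c) k"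
proof (rule gen_field_least)
  show sV: "subfield (lin_span F ((^) c) k)"
    using subfield_lin_span_powers[OF sF fin _ top] \<open>k \<noteq> 0\<close> by simp
  show "F \<subseteq> lin_span F ((^) c) k"
  proof
    fix x assume "x \<in> F"
    then show "x \<in> lin_span F ((^) c) k"
      using lin_span_smult[OF sF _ subfield_1[OF sV]] by simp
  qed
  show "c \<in> lin_span F ((^) c) k"
    using lin_span_powers_mult_closed[OF sF top subfield_1[OF sV]] by simp
qed

lemma card_subfield_gt_1: "subfield F \<Longrightarrow> finite F \<Longrightarrow> card F > 1"
  using card_mono[of F "{0, 1}"] by (simp add: subfield_0 subfield_1)

lemma first_dependent_prefix:
  assumes "\<not> inj_on (lincomb g n) (coords F n)"
  obtains k where "inj_on (lincomb g k) (coords F k)"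
    and "\<not> inj_on (lincomb g (Suc k)) (coords F (Suc k))"
proof -
  have "inj_on (lincomb g 0) (coords F 0)"
    unfolding inj_on_def coords_def by (auto simp: fun_eq_iff)
  then show ?thesis
    using ex_least_nat_less[of "\<lambda>k. \<not> inj_on (lincomb g k) (coords F k)" n] assms that by blast
qed

lemma gen_field_power_basis:
  assumes sF: "subfield F" and fin: "finite F" and dim: "has_dim F (gen_field F c) m"
  shows "1 \<le> m" "inj_on (lincomb ((^) c) m) (coords F m)" "c ^ m \<in> lin_span F ((^) c) m"
proof -
  let ?K = "gen_field F c" and ?V = "lin_span F ((^) c)"
  have sK: "subfield ?K" and FK: "F \<subseteq> ?K" and cK: "c \<in> ?K"
    by (rule subfield_gen_field subset_gen_field mem_gen_field)+
  have V_K: "?V k \<subseteq> ?K" for k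
    using sK FK subfield_power[OF sK cK] by (rule lin_span_subset)
  have card_K: "card ?K = card F ^ m"
    using card_if_has_dim[OF sK FK fin dim] .
  have card_F: "card F > 1"
    using card_subfield_gt_1[OF sF fin] .
  then have fin_K: "finite ?K"
    using card_K by (intro card_ge_0_finite) simp
  have "\<not> inj_on (lincomb ((^) c) (Suc m)) (coords F (Suc m))"
  proof
    assume inj: "inj_on (lincomb ((^) c) (Suc m)) (coords F (Suc m))"
    have "card (?V (Suc m)) \<le> card ?K"
      by (rule card_mono[OF fin_K V_K])
    with card_F show False
      unfolding card_lin_span[OF fin inj] card_K by simp
  qed
  then obtain k where inj: "inj_on (lincomb ((^) c) k) (coords F k)"
    and "\<not> inj_on (lincomb ((^) c) (Suc k)) (coords F (Suc k))"
    by (rule first_dependent_prefix)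
  then have top: "c ^ k \<in> ?V k"
    using mem_lin_span_if_not_inj_on_Suc[OF sF] by blast
  have "k \<noteq> 0"
    using top by (rule contrapos_pn) (simp add: lin_span_0)
  then have "?V k = ?K"
    using gen_field_subset_lin_span_powers[OF sF fin _ top] V_K by (simp add: subset_antisym)
  then have "card F ^ k = card F ^ m"
    using card_lin_span[OF fin inj] card_K by simp
  with card_F have "k = m" by simp
  with \<open>k \<noteq> 0\<close> inj top show "1 \<le> m" "inj_on (lincomb ((^) c) m) (coords F m)" "c ^ m \<in> ?V m"
    by auto
qed

text \<open>If c is a root of X^m - (\<Sum>i<m. \<gamma> i * X^i), division by X - c leaves the quotient
  \<Sum>k<m. quot_coeff c \<gamma> m k * X^(m - 1 - k).\<close>
definition quot_coeff :: "'a::field \<Rightarrow> (nat \<Rightarrow> 'a) \<Rightarrow> nat \<Rightarrow> nat \<Rightarrow> 'a" where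
  "quot_coeff c \<gamma> m k = c ^ k - (\<Sum>i<k. \<gamma> (m - k + i) * c ^ i)"

lemma quot_coeff_0: "quot_coeff c \<gamma> m 0 = 1"
  unfolding quot_coeff_def by simp

lemma quot_coeff_self: "c ^ m = lincomb ((^) c) m \<gamma> \<Longrightarrow> quot_coeff c \<gamma> m m = 0"
  unfolding quot_coeff_def lincomb_def by simp

lemma quot_coeff_Suc:
  assumes "k < m"
  shows "c * quot_coeff c \<gamma> m k = quot_coeff c \<gamma> m (Suc k) + \<gamma> (m - Suc k)"
proof -
  have "(\<Sum>i<k. \<gamma> (m - Suc k + Suc i) * c ^ Suc i) = (\<Sum>i<k. \<gamma> (m - k + i) * c ^ Suc i)"
    using assms by (intro sum.cong) (simp_all add: Suc_diff_Suc)
  then show ?thesis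
    unfolding quot_coeff_def sum.lessThan_Suc_shift
    by (simp add: sum_distrib_left algebra_simps)
qed

lemma inj_on_lincomb_quot_coeff:
  assumes sF: "subfield F" and fin: "finite F"
    and inj: "inj_on (lincomb ((^) c) m) (coords F m)" and \<gamma>: "\<gamma> \<in> coords F m"
  shows "inj_on (lincomb (quot_coeff c \<gamma> m) m) (coords F m)"
proof (rule inj_on_lincomb_if_spanned[OF sF fin inj])
  fix i assume "i < m"
  then show "c ^ i \<in> lin_span F (quot_coeff c \<gamma> m) m"
  proof (induction i rule: less_induct)
    case (less i)
    have "c ^ i = quot_coeff c \<gamma> m i + (\<Sum>j<i. \<gamma> (m - i + j) * c ^ j)"
      unfolding quot_coeff_def by simp
    also have "\<dots> \<in> lin_span F (quot_coeff c \<gamma> m) m"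
      using less
      by (intro lin_span_add[OF sF] lin_span_generator[OF sF] lin_span_sum[OF sF]
          lin_span_smult[OF sF coords_mem[OF sF \<gamma>]]) auto
    finally show ?case .
  qed
qed

text \<open>Homogenised synthetic division by X - c. For e = quot_coeff c \<gamma> (Suc r) the right-hand side
  is the homogenised minimal polynomial of c, whose coefficients lie in F.\<close>
lemma homogeneous_linear_factor:
  fixes c s t :: "'a::comm_ring_1"
  assumes e0: "e 0 = 1" and e_top: "e (Suc r) = 0"
    and e_Suc: "\<And>k. k \<le> r \<Longrightarrow> c * e k = e (Suc k) + g k"
  shows "(s - t * c) * (\<Sum>k\<le>r. s ^ (r - k) * t ^ k * e k)
    = s ^ Suc r - (\<Sum>k\<le>r. s ^ (r - k) * t ^ Suc k * g k)"
proof -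
  define f where "f k = s ^ (Suc r - k) * t ^ k * e k" for k
  have "(s - t * c) * (s ^ (r - k) * t ^ k * e k) = f k - f (Suc k) - s ^ (r - k) * t ^ Suc k * g k"
    if "k \<le> r" for k
  proof -
    have "(s - t * c) * (s ^ (r - k) * t ^ k * e k)
        = s ^ Suc (r - k) * t ^ k * e k - s ^ (r - k) * t ^ Suc k * (c * e k)"
      by (simp add: algebra_simps)
    then show ?thesis
      unfolding f_def e_Suc[OF that] using that by (simp add: Suc_diff_le algebra_simps)
  qed
  then have "(s - t * c) * (\<Sum>k\<le>r. s ^ (r - k) * t ^ k * e k)
      = (\<Sum>k<Suc r. f k - f (Suc k) - s ^ (r - k) * t ^ Suc k * g k)"
    unfolding sum_distrib_left lessThan_Suc_atMost by (intro sum.cong) auto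
  also have "\<dots> = (\<Sum>k<Suc r. f k - f (Suc k)) - (\<Sum>k<Suc r. s ^ (r - k) * t ^ Suc k * g k)"
    by (rule sum_subtractf)
  also have "\<dots> = f 0 - f (Suc r) - (\<Sum>k<Suc r. s ^ (r - k) * t ^ Suc k * g k)"
    by (simp only: sum_lessThan_telescope')
  finally show ?thesis
    unfolding f_def e0 e_top lessThan_Suc_atMost by simp
qed

lemma veronese_mem_coords:
  "subfield F \<Longrightarrow> s \<in> F \<Longrightarrow> t \<in> F \<Longrightarrow> veronese r s t \<in> coords F (Suc r)"
  unfolding coords_def veronese_def by (auto intro!: subfield_mult subfield_power)

lemma veronese_neq_zero: "(s, t) \<noteq> (0, 0) \<Longrightarrow> veronese r s t \<noteq> (\<lambda>i. 0)"
  unfolding veronese_def by (cases "s = 0") (auto simp: fun_eq_iff dest: spec[of _ 0] spec[of _ r])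

lemma lincomb_veronese: "lincomb g (Suc r) (veronese r s t) = (\<Sum>k\<le>r. s ^ (r - k) * t ^ k * g k)"
  unfolding lincomb_def veronese_def lessThan_Suc_atMost by (intro sum.cong) auto

lemma inverse_linear_eq_scalar_mult_veronese:
  fixes c :: "'a::field"
  assumes sF: "subfield F" and c: "c \<notin> F"
    and \<gamma>: "\<gamma> \<in> coords F (Suc r)" and min_poly: "c ^ Suc r = lincomb ((^) c) (Suc r) \<gamma>"
    and inj: "inj_on (lincomb (quot_coeff c \<gamma> (Suc r)) (Suc r)) (coords F (Suc r))"
    and st: "s \<in> F" "t \<in> F" "(s, t) \<noteq> (0, 0)"
  obtains N where "N \<in> F" "N \<noteq> 0"
    "inverse (s - t * c) = inverse N * lincomb (quot_coeff c \<gamma> (Suc r)) (Suc r) (veronese r s t)"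
proof -
  let ?e = "quot_coeff c \<gamma> (Suc r)"
  let ?Q = "lincomb ?e (Suc r) (veronese r s t)"
  have "s - t * c \<noteq> 0"
  proof
    assume "s - t * c = 0"
    with st(3) have "t \<noteq> 0" "c = s / t"
      by (auto simp: field_simps)
    with c st(1,2) sF show False
      using subfield_divide by blast
  qed
  moreover have "?Q \<noteq> 0"
  proof
    assume "?Q = 0"
    then have "?Q = lincomb ?e (Suc r) (\<lambda>i. 0)"
      by (simp add: lincomb_def)
    with inj have "veronese r s t = (\<lambda>i. 0)"
      using veronese_mem_coords[OF sF st(1,2)] coords_zero[OF sF] unfolding inj_on_def by blast
    with veronese_neq_zero[OF st(3)] show False ..
  qed
  moreover have "(s - t * c) * ?Q = s ^ Suc r - (\<Sum>k\<le>r. s ^ (r - k) * t ^ Suc k * \<gamma> (r - k))"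
    unfolding lincomb_veronese
    using quot_coeff_0 quot_coeff_self[OF min_poly] quot_coeff_Suc[of _ "Suc r" c \<gamma>]
    by (intro homogeneous_linear_factor) auto
  then have "(s - t * c) * ?Q \<in> F"
    using sF st(1,2) coords_mem[OF sF \<gamma>]
    by (auto intro!: subfield_diff subfield_power subfield_sum subfield_mult)
  ultimately show ?thesis
    by (intro that[of "(s - t * c) * ?Q"]) (auto simp: field_simps)
qed

lemma lin_indep_if_pt_neq:
  assumes "subfield F" "a \<noteq> 0" "b \<noteq> 0" "pt F a \<noteq> pt F b"
    and "s \<in> F" "t \<in> F" "(s, t) \<noteq> (0, 0)"
  shows "s * b - t * a \<noteq> 0"
proof
  assume eq: "s * b - t * a = 0"
  with assms(3,7) have "t \<noteq> 0"
    by auto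
  with eq assms(2) have "a = (s / t) * b" "s / t \<noteq> 0"
    by (auto simp: field_simps)
  then have "pt F a = pt F b"
    using pt_mult_scalar assms(1,5,6) subfield_divide by metis
  with assms(4) show False ..
qed

lemma jmap_join_line:
  assumes sF: "subfield F" and "a \<noteq> 0" "b \<noteq> 0" "pt F a \<noteq> pt F b"
  shows "jmap F ` join_line F a b
    = {pt F (inverse (s * b - t * a)) | s t. s \<in> F \<and> t \<in> F \<and> (s, t) \<noteq> (0, 0)}"
proof (intro equalityI subsetI)
  fix P assume "P \<in> jmap F ` join_line F a b"
  then obtain x u v where x: "x \<noteq> 0" "x = u * a + v * b" and uv: "u \<in> F" "v \<in> F"
    and P: "P = jmap F (pt F x)"
    unfolding join_line_def by blast
  have "P = pt F (inverse (v * b - (- u) * a))"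
    using P x jmap_pt[OF sF] by (simp add: add.commute)
  moreover have "(v, - u) \<noteq> (0, 0)"
    using x by auto
  ultimately show "P \<in> {pt F (inverse (s * b - t * a)) | s t. s \<in> F \<and> t \<in> F \<and> (s, t) \<noteq> (0, 0)}"
    using uv subfield_uminus[OF sF] by blast
next
  fix P assume "P \<in> {pt F (inverse (s * b - t * a)) | s t. s \<in> F \<and> t \<in> F \<and> (s, t) \<noteq> (0, 0)}"
  then obtain s t where st: "s \<in> F" "t \<in> F" "(s, t) \<noteq> (0, 0)" and P: "P = pt F (inverse (s * b - t * a))"
    by blast
  have x: "s * b - t * a \<noteq> 0"
    using lin_indep_if_pt_neq[OF assms st] .
  have "s * b - t * a = (- t) * a + s * b"
    by simp
  with x st have "pt F (s * b - t * a) \<in> join_line F a b"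
    unfolding join_line_def using subfield_uminus[OF sF] by blast
  moreover have "P = jmap F (pt F (s * b - t * a))"
    using P jmap_pt[OF sF x] by simp
  ultimately show "P \<in> jmap F ` join_line F a b"
    by blast
qed

lemma is_ruple_image_inverse_line:
  fixes b c :: "'a::field"
  assumes sF: "subfield F" and fin: "finite F" and dim: "has_dim F (gen_field F c) (Suc r)"
    and c: "c \<notin> F" and b: "b \<noteq> 0"
  shows "is_ruple_image F r
    {pt F (inverse (b * (s - t * c))) | s t. s \<in> F \<and> t \<in> F \<and> (s, t) \<noteq> (0, 0)}"
proof -
  have inj: "inj_on (lincomb ((^) c) (Suc r)) (coords F (Suc r))"
    and "c ^ Suc r \<in> lin_span F ((^) c) (Suc r)"
    using gen_field_power_basis[OF sF fin dim] by simp_all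
  then obtain \<gamma> where \<gamma>: "\<gamma> \<in> coords F (Suc r)" and min_poly: "c ^ Suc r = lincomb ((^) c) (Suc r) \<gamma>"
    unfolding lin_span_def by blast
  define e where "e = quot_coeff c \<gamma> (Suc r)"
  define \<phi> where "\<phi> \<sigma> = inverse b * lincomb e (Suc r) \<sigma>" for \<sigma>
  have inj_e: "inj_on (lincomb e (Suc r)) (coords F (Suc r))"
    unfolding e_def using inj_on_lincomb_quot_coeff[OF sF fin inj \<gamma>] .
  have "F_linear_on F r \<phi>"
    unfolding F_linear_on_def \<phi>_def lincomb_add lincomb_smult by (simp add: algebra_simps)
  moreover have "inj_on \<phi> (coord_space F r)"
    using inj_e b unfolding coord_space_eq_coords inj_on_def \<phi>_def by simp
  moreover have "pt F (inverse (b * (s - t * c))) = pt F (\<phi> (veronese r s t))"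
    if st: "s \<in> F" "t \<in> F" "(s, t) \<noteq> (0, 0)" for s t
  proof -
    obtain N where N: "N \<in> F" "N \<noteq> 0"
      and "inverse (s - t * c) = inverse N * lincomb e (Suc r) (veronese r s t)"
      using inverse_linear_eq_scalar_mult_veronese[OF sF c \<gamma> min_poly inj_e[unfolded e_def] st]
      unfolding e_def .
    then have "inverse (b * (s - t * c)) = inverse N * \<phi> (veronese r s t)"
      unfolding \<phi>_def by (simp add: inverse_mult_distrib mult_ac)
    then show ?thesis
      using pt_mult_scalar[OF sF subfield_inverse[OF sF N(1)]] N(2) by simp
  qed
  then have "{pt F (inverse (b * (s - t * c))) | s t. s \<in> F \<and> t \<in> F \<and> (s, t) \<noteq> (0, 0)}
      = {pt F (\<phi> (veronese r s t)) | s t. s \<in> F \<and> t \<in> F \<and> (s, t) \<noteq> (0, 0)}"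
    by (intro Collect_cong) blast
  ultimately show ?thesis
    unfolding is_ruple_image_def by blast
qed

theorem mainTheorem1:
  fixes F :: "'a::{field,finite} set" and n m :: nat and a b :: 'a
  assumes "subfield F"
    and "has_dim F UNIV n" and "n \<ge> 2"
    and "a \<noteq> 0" and "b \<noteq> 0" and "pt F a \<noteq> pt F b"
    and "has_dim F (gen_field F (a * inverse b)) m"
  shows "is_ruple_image F (m - 1) (jmap F ` join_line F a b)"
proof -
  define c where "c = a * inverse b"
  have sF: "subfield F" and fin: "finite F"
    using assms(1) by simp_all
  have dim: "has_dim F (gen_field F c) (Suc (m - 1))"
    using assms(7) gen_field_power_basis(1)[OF sF fin assms(7)] unfolding c_def by simp
  have "c * b - 1 * a = 0"
    using assms(5) unfolding c_def by simp
  then have "c \<notin> F"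
    using lin_indep_if_pt_neq[OF sF assms(4-6), of c 1] subfield_1[OF sF] by auto
  have "s * b - t * a = b * (s - t * c)" for s t
    using assms(5) unfolding c_def by (simp add: field_simps)
  then show ?thesis
    using is_ruple_image_inverse_line[OF sF fin dim \<open>c \<notin> F\<close> assms(5)]
    unfolding jmap_join_line[OF sF assms(4-6)] by simp
qed

end
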